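(* Let $E$ be a Banach lattice and let $\mathrm{l\text{-}Lwc}(E)$ denote the set of limitedly L-weakly compact operators $E\to E$. Then $\mathrm{l\text{-}Lwc}(E)$ is a norm-closed right ideal in the algebra $\mathrm{L}(E)$ of all bounded operators on $E$ (that is, a closed linear subspace such that $TS\in\mathrm{l\text{-}Lwc}(E)$ whenever $T\in\mathrm{l\text{-}Lwc}(E)$ and $S\in\mathrm{L}(E)$), and hence a subalgebra of $\mathrm{L}(E)$; moreover, this subalgebra is unital if and only if the identity operator $I_E$ is limitedly L-weakly compact.
   Context: All vector spaces are real and operators are linear and bounded. For a subset $A$ of a Banach lattice $F$, $\mathrm{sol}(A)=\bigcup_{a\in A}[-|a|,|a|]$. A subset $A\subseteq F$ is an Lwc-set if every disjoint sequence in $\mathrm{sol}(A)$ is norm-null. A bounded subset $A$ of a Banach space $X$ is limited if every weak$^\ast$-null sequence in $X'$ converges to $0$ uniformly on $A$. An operator $T:X\to F$ is limitedly L-weakly compact if $T$ maps every limited subset of $X$ onto an Lwc-subset of $F$. *)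

theory Defs
  imports "HOL-Analysis.Analysis"
begin

class banach_lattice = banach + ordered_real_vector + lattice +
  assumes lattice_norm: "sup x (- x) \<le> sup y (- y) \<Longrightarrow> norm x \<le> norm y"

definition labs :: "'a::banach_lattice \<Rightarrow> 'a" where
  "labs x = sup x (- x)"

definition sol :: "'a::banach_lattice set \<Rightarrow> 'a set" where
  "sol A = (\<Union>a\<in>A. {y. - labs a \<le> y \<and> y \<le> labs a})"

definition disjoint_seq :: "(nat \<Rightarrow> 'a::banach_lattice) \<Rightarrow> bool" where
  "disjoint_seq x \<longleftrightarrow> (\<forall>n m. n \<noteq> m \<longrightarrow> inf (labs (x n)) (labs (x m)) = 0)"

definition Lwc_set :: "'a::banach_lattice set \<Rightarrow> bool" where
  "Lwc_set A \<longleftrightarrow> (\<forall>x. disjoint_seq x \<and> (\<forall>n. x n \<in> sol A) \<longrightarrow> x \<longlonglongrightarrow> 0)"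

text \<open>Limited set: bounded, and every weak-star null sequence of the dual
  converges to 0 uniformly on A.\<close>
definition limited_set :: "'a::real_normed_vector set \<Rightarrow> bool" where
  "limited_set A \<longleftrightarrow> bounded A \<and>
     (\<forall>f :: nat \<Rightarrow> 'a \<Rightarrow> real.
        (\<forall>n. bounded_linear (f n)) \<and> (\<forall>x. (\<lambda>n. f n x) \<longlonglongrightarrow> 0) \<longrightarrow>
        (\<forall>e>0. \<forall>\<^sub>F n in sequentially. \<forall>a\<in>A. \<bar>f n a\<bar> < e))"

definition limitedly_L_weakly_compact :: "('a::real_normed_vector \<Rightarrow> 'b::banach_lattice) \<Rightarrow> bool" where
  "limitedly_L_weakly_compact T \<longleftrightarrow> bounded_linear T \<and>
     (\<forall>A. limited_set A \<longrightarrow> Lwc_set (T ` A))"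

definition lLwc :: "('a::banach_lattice \<Rightarrow>\<^sub>L 'a) set" where
  "lLwc = {T. limitedly_L_weakly_compact (blinfun_apply T)}"

end

theory Submission
  imports Defs
begin

text \<open>The argument rests on a Riesz-decomposition splitting. Let \<open>(y\<^sub>n)\<close> be disjoint with
  \<open>|y\<^sub>n| \<le> |b\<^sub>n| + |c\<^sub>n|\<close>, where the \<open>b\<^sub>n\<close> lie in an Lwc-set \<open>B\<close>. Then
  \<open>|y\<^sub>n| = z\<^sub>n + w\<^sub>n\<close> with \<open>z\<^sub>n = |y\<^sub>n| \<sqinter> |b\<^sub>n|\<close> and \<open>0 \<le> w\<^sub>n \<le> |c\<^sub>n|\<close>; both sequences are
  dominated by \<open>|y\<^sub>n|\<close>, hence disjoint, so \<open>z\<^sub>n \<rightarrow> 0\<close> because \<open>z\<^sub>n \<in> sol B\<close>. Taking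
  \<open>c\<^sub>n\<close> from a second Lwc-set shows that sums of Lwc-sets are Lwc-sets; taking \<open>\<parallel>c\<^sub>n\<parallel> \<le> \<epsilon>\<close>
  shows that a set approximable within every \<open>\<epsilon>\<close> by Lwc-sets is an Lwc-set. Since
  bounded operators map limited sets to limited sets, \<open>T S\<close> is limitedly L-weakly
  compact whenever \<open>T\<close> is; the two closure properties of Lwc-sets give that
  \<open>l-Lwc(E)\<close> is a closed subspace.\<close>

lemma labs_nonneg: "0 \<le> labs (x::'a::banach_lattice)"
proof -
  have "x + - x \<le> labs x + labs x"
    by (rule add_mono) (simp_all add: labs_def)
  then have "0 \<le> (2::real) *\<^sub>R labs x" by (simp add: scaleR_2)
  then show ?thesis by (simp add: zero_le_scaleR_iff)
qed

lemma labs_of_nonneg: "0 \<le> (x::'a::banach_lattice) \<Longrightarrow> labs x = x"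
  using order_trans[of "- x" 0 x] by (simp add: labs_def sup_absorb1)

lemma labs_zero [simp]: "labs (0::'a::banach_lattice) = 0"
  by (simp add: labs_def)

lemma norm_labs_mono: "labs (x::'a::banach_lattice) \<le> labs y \<Longrightarrow> norm x \<le> norm y"
  unfolding labs_def by (rule lattice_norm)

lemma norm_labs [simp]: "norm (labs (x::'a::banach_lattice)) = norm x"
  by (rule antisym; rule norm_labs_mono) (simp_all add: labs_of_nonneg labs_nonneg)

lemma labs_triangle_ineq: "labs ((x::'a::banach_lattice) + y) \<le> labs x + labs y"
proof -
  have "x + y \<le> labs x + labs y" "- x + - y \<le> labs x + labs y"
    by (rule add_mono; simp add: labs_def)+
  then show ?thesis by (simp add: labs_def add.commute)
qed

lemma labs_le_iff: "labs (x::'a::banach_lattice) \<le> labs b \<longleftrightarrow> - labs b \<le> x \<and> x \<le> labs b"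
  unfolding labs_def by (auto simp: minus_le_iff intro: order_trans)

lemma mem_sol_iff: "x \<in> sol A \<longleftrightarrow> (\<exists>a\<in>A. labs x \<le> labs a)"
  by (simp add: sol_def labs_le_iff)

lemma sol_mono: "A \<subseteq> B \<Longrightarrow> sol A \<subseteq> sol B"
  by (auto simp: sol_def)

lemma diff_inf_le:
  fixes u p q :: "'a::banach_lattice"
  assumes "0 \<le> q" and "u \<le> p + q"
  shows "u - inf u p \<le> q"
proof -
  have "u - q \<le> u" "u - q \<le> p"
    using assms by (simp_all add: diff_le_eq add_increasing2)
  then have "u - q \<le> inf u p"
    by simp
  then show ?thesis
    by (metis diff_le_eq add.commute)
qed

lemma disjoint_seq_dominated:
  assumes "disjoint_seq y" and "\<And>n. labs (v n) \<le> labs (y n)"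
  shows "disjoint_seq v"
  unfolding disjoint_seq_def
proof (intro allI impI)
  fix n m :: nat
  assume "n \<noteq> m"
  have "inf (labs (v n)) (labs (v m)) \<le> inf (labs (y n)) (labs (y m))"
    by (intro inf_mono assms(2))
  also have "\<dots> = 0"
    using assms(1) \<open>n \<noteq> m\<close> by (simp add: disjoint_seq_def)
  finally show "inf (labs (v n)) (labs (v m)) = 0"
    by (simp add: antisym labs_nonneg)
qed

lemma Lwc_set_mono: "Lwc_set B \<Longrightarrow> A \<subseteq> B \<Longrightarrow> Lwc_set A"
  unfolding Lwc_set_def using sol_mono by blast

lemma Lwc_set_zero: "Lwc_set {0::'a::banach_lattice}"
  unfolding Lwc_set_def
proof (intro allI impI)
  fix y :: "nat \<Rightarrow> 'a"
  assume "disjoint_seq y \<and> (\<forall>n. y n \<in> sol {0})"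
  then have "y = (\<lambda>n. 0)"
    by (auto simp: sol_def antisym)
  then show "y \<longlonglongrightarrow> 0" by simp
qed

lemma Lwc_set_disjoint_split:
  fixes y b c :: "nat \<Rightarrow> 'a::banach_lattice"
  assumes B: "Lwc_set B" and b: "\<And>n. b n \<in> B"
    and y: "disjoint_seq y" and le: "\<And>n. labs (y n) \<le> labs (b n) + labs (c n)"
  obtains z w :: "nat \<Rightarrow> 'a" where "z \<longlonglongrightarrow> 0" and "disjoint_seq w" and "\<And>n. labs (w n) \<le> labs (c n)"
    and "\<And>n. norm (y n) \<le> norm (z n) + norm (w n)"
proof -
  define z where "z n = inf (labs (y n)) (labs (b n))" for n
  define w where "w n = labs (y n) - z n" for n
  have z_nonneg: "0 \<le> z n" and w_nonneg: "0 \<le> w n" for n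
    by (simp_all add: z_def w_def labs_nonneg)
  have labs_z: "labs (z n) \<le> labs (y n)" "labs (z n) \<le> labs (b n)" for n
    unfolding labs_of_nonneg[OF z_nonneg] by (simp_all add: z_def)
  have "labs (w n) \<le> labs (y n)" for n
    unfolding labs_of_nonneg[OF w_nonneg] using z_nonneg by (simp add: w_def)
  then have w_disjoint: "disjoint_seq w"
    by (rule disjoint_seq_dominated[OF y])
  have w_le: "labs (w n) \<le> labs (c n)" for n
    unfolding labs_of_nonneg[OF w_nonneg] unfolding w_def z_def
    by (rule diff_inf_le[OF labs_nonneg le])
  have "disjoint_seq z"
    using y labs_z(1) by (rule disjoint_seq_dominated)
  moreover have "z n \<in> sol B" for n
    using b labs_z(2) by (auto simp: mem_sol_iff)
  ultimately have z_null: "z \<longlonglongrightarrow> 0"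
    using B by (simp add: Lwc_set_def)
  have y_le: "norm (y n) \<le> norm (z n) + norm (w n)" for n
    using norm_labs[of "y n"] norm_triangle_ineq[of "z n" "w n"] by (simp add: w_def)
  show thesis
    by (rule that[OF z_null w_disjoint w_le y_le])
qed

lemma sol_choice:
  assumes "\<And>n. y n \<in> sol A"
  obtains a where "\<And>n. a n \<in> A" and "\<And>n. labs (y n) \<le> labs (a n)"
  using assms unfolding mem_sol_iff by metis

lemma Lwc_set_sums:
  fixes A B :: "'a::banach_lattice set"
  assumes A: "Lwc_set A" and B: "Lwc_set B"
  shows "Lwc_set {a + b | a b. a \<in> A \<and> b \<in> B}"
  unfolding Lwc_set_def
proof (intro allI impI)
  fix y
  assume y: "disjoint_seq y \<and> (\<forall>n. y n \<in> sol {a + b | a b. a \<in> A \<and> b \<in> B})"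
  have "\<forall>n. \<exists>a b. a \<in> A \<and> b \<in> B \<and> labs (y n) \<le> labs (a + b)"
    using y by (fastforce simp: mem_sol_iff)
  then obtain a b where ab: "\<And>n. a n \<in> A" "\<And>n. b n \<in> B"
    and "\<And>n. labs (y n) \<le> labs (a n + b n)"
    by metis
  then have "labs (y n) \<le> labs (a n) + labs (b n)" for n
    using labs_triangle_ineq order_trans by blast
  then obtain z w :: "nat \<Rightarrow> 'a" where "z \<longlonglongrightarrow> 0" "disjoint_seq w"
    and w_le: "\<And>n. labs (w n) \<le> labs (b n)"
    and y_le: "\<And>n. norm (y n) \<le> norm (z n) + norm (w n)"
    by (rule Lwc_set_disjoint_split[OF A ab(1) conjunct1[OF y]]) blast
  moreover have "w \<longlonglongrightarrow> 0"
    using B \<open>disjoint_seq w\<close> w_le ab(2) by (auto simp: Lwc_set_def mem_sol_iff)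
  ultimately have "(\<lambda>n. norm (z n) + norm (w n)) \<longlonglongrightarrow> 0"
    by (intro tendsto_add_zero tendsto_norm_zero)
  then show "y \<longlonglongrightarrow> 0"
    by (rule Lim_null_comparison[rotated]) (simp add: y_le)
qed

lemma Lwc_set_approx:
  fixes A :: "'a::banach_lattice set"
  assumes approx: "\<And>e. e > 0 \<Longrightarrow> \<exists>B. Lwc_set B \<and> (\<forall>a\<in>A. \<exists>b\<in>B. norm (a - b) \<le> e)"
  shows "Lwc_set A"
  unfolding Lwc_set_def
proof (intro allI impI)
  fix y
  assume y: "disjoint_seq y \<and> (\<forall>n. y n \<in> sol A)"
  then obtain a where a: "\<And>n. a n \<in> A" and y_le_a: "\<And>n. labs (y n) \<le> labs (a n)"
    by (meson sol_choice)
  show "y \<longlonglongrightarrow> 0"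
    unfolding tendsto_iff dist_norm diff_zero
  proof (intro allI impI)
    fix r :: real
    assume "0 < r"
    then obtain B where B: "Lwc_set B" and "\<forall>a\<in>A. \<exists>b\<in>B. norm (a - b) \<le> r / 2"
      using approx[of "r / 2"] by auto
    with a have "\<forall>n. \<exists>b\<in>B. norm (a n - b) \<le> r / 2"
      by blast
    then obtain b where b: "\<And>n. b n \<in> B" and close: "\<And>n. norm (a n - b n) \<le> r / 2"
      by metis
    have "labs (y n) \<le> labs (b n) + labs (a n - b n)" for n
      using y_le_a labs_triangle_ineq[of "b n" "a n - b n"] by (auto intro: order_trans)
    then obtain z w :: "nat \<Rightarrow> 'a" where "z \<longlonglongrightarrow> 0"
      and w_le: "\<And>n. labs (w n) \<le> labs (a n - b n)"
      and y_le: "\<And>n. norm (y n) \<le> norm (z n) + norm (w n)"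
      by (rule Lwc_set_disjoint_split[OF B b conjunct1[OF y]]) blast
    have w_small: "norm (w n) \<le> r / 2" for n
      using norm_labs_mono[OF w_le] close order_trans by blast
    have "\<forall>\<^sub>F n in sequentially. norm (z n) < r / 2"
      using order_tendstoD(2)[OF tendsto_norm_zero[OF \<open>z \<longlonglongrightarrow> 0\<close>], of "r / 2"] \<open>0 < r\<close>
      by simp
    then show "\<forall>\<^sub>F n in sequentially. norm (y n) < r"
    proof (rule eventually_mono)
      show "norm (z n) < r / 2 \<Longrightarrow> norm (y n) < r" for n
        using y_le[of n] w_small[of n] by linarith
    qed
  qed
qed

lemma limited_set_image:
  assumes S: "bounded_linear S" and A: "limited_set A"
  shows "limited_set (S ` A)"
  unfolding limited_set_def
proof (intro conjI allI impI)
  show "bounded (S ` A)"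
    using A S bounded_linear_image limited_set_def by blast
next
  fix f :: "nat \<Rightarrow> 'b \<Rightarrow> real" and e :: real
  assume f: "(\<forall>n. bounded_linear (f n)) \<and> (\<forall>x. (\<lambda>n. f n x) \<longlonglongrightarrow> 0)" and "0 < e"
  have "(\<forall>n. bounded_linear (f n \<circ> S)) \<and> (\<forall>x. (\<lambda>n. (f n \<circ> S) x) \<longlonglongrightarrow> 0)"
    using f S bounded_linear_compose by (auto simp: o_def)
  then have "\<forall>\<^sub>F n in sequentially. \<forall>a\<in>A. \<bar>(f n \<circ> S) a\<bar> < e"
    using A \<open>0 < e\<close> unfolding limited_set_def by (elim conjE allE[of _ "\<lambda>n. f n \<circ> S"]) simp
  then show "\<forall>\<^sub>F n in sequentially. \<forall>a\<in>S ` A. \<bar>f n a\<bar> < e"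
    by (auto elim!: eventually_mono)
qed

lemma mem_lLwc_iff: "T \<in> lLwc \<longleftrightarrow> (\<forall>A. limited_set A \<longrightarrow> Lwc_set (blinfun_apply T ` A))"
  by (simp add: lLwc_def limitedly_L_weakly_compact_def blinfun.bounded_linear_right)

lemma lLwc_compose:
  assumes "T \<in> lLwc"
  shows "T o\<^sub>L S \<in> lLwc"
  unfolding mem_lLwc_iff
proof (intro allI impI)
  fix A :: "'a set"
  assume "limited_set A"
  then have "limited_set (blinfun_apply S ` A)"
    by (rule limited_set_image[OF blinfun.bounded_linear_right])
  then have "Lwc_set (blinfun_apply T ` blinfun_apply S ` A)"
    using assms by (simp add: mem_lLwc_iff)
  then show "Lwc_set (blinfun_apply (T o\<^sub>L S) ` A)"
    by (simp add: image_image)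
qed

lemma lLwc_scaleR:
  assumes "T \<in> lLwc"
  shows "c *\<^sub>R T \<in> lLwc"
proof -
  have "c *\<^sub>R T = T o\<^sub>L (c *\<^sub>R id_blinfun)"
    by (rule blinfun_eqI) (simp add: blinfun.scaleR_right scaleR_blinfun.rep_eq)
  then show ?thesis
    using assms by (simp add: lLwc_compose)
qed

lemma lLwc_zero: "0 \<in> lLwc"
  unfolding mem_lLwc_iff using Lwc_set_zero by (auto intro: Lwc_set_mono)

lemma lLwc_add:
  assumes "T \<in> lLwc" and "U \<in> lLwc"
  shows "T + U \<in> lLwc"
  unfolding mem_lLwc_iff
proof (intro allI impI)
  fix A :: "'a set"
  assume "limited_set A"
  then have "Lwc_set {a + b | a b. a \<in> T ` A \<and> b \<in> U ` A}"
    using assms by (intro Lwc_set_sums) (auto simp: mem_lLwc_iff)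
  then show "Lwc_set (blinfun_apply (T + U) ` A)"
    by (rule Lwc_set_mono) (auto simp: plus_blinfun.rep_eq)
qed

lemma closed_lLwc: "closed (lLwc :: ('a::banach_lattice \<Rightarrow>\<^sub>L 'a) set)"
  unfolding closed_sequential_limits
proof (intro allI impI)
  fix Tk :: "nat \<Rightarrow> 'a \<Rightarrow>\<^sub>L 'a" and T
  assume Tk: "(\<forall>k. Tk k \<in> lLwc) \<and> Tk \<longlonglongrightarrow> T"
  show "T \<in> lLwc"
    unfolding mem_lLwc_iff
  proof (intro allI impI)
    fix A :: "'a set"
    assume A: "limited_set A"
    then obtain M where "M > 0" and M: "\<forall>x\<in>A. norm x \<le> M"
      unfolding limited_set_def bounded_pos by blast
    show "Lwc_set (blinfun_apply T ` A)"
    proof (rule Lwc_set_approx)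
      fix e :: real
      assume "e > 0"
      with \<open>M > 0\<close> Tk obtain k where "norm (Tk k - T) < e / M"
        unfolding LIMSEQ_iff by (meson divide_pos_pos order.refl)
      then have k: "norm (T - Tk k) \<le> e / M"
        by (simp add: norm_minus_commute)
      have "norm (T a - Tk k a) \<le> e" if "a \<in> A" for a
      proof -
        have "norm (T a - Tk k a) \<le> norm (T - Tk k) * norm a"
          by (metis blinfun.diff_left norm_blinfun)
        also have "\<dots> \<le> e / M * M"
          using k M that \<open>e > 0\<close> \<open>M > 0\<close> by (intro mult_mono) auto
        finally show ?thesis using \<open>M > 0\<close> by simp
      qed
      moreover have "Lwc_set (blinfun_apply (Tk k) ` A)"
        using Tk A by (simp add: mem_lLwc_iff)
      ultimately show "\<exists>B. Lwc_set B \<and> (\<forall>b\<in>blinfun_apply T ` A. \<exists>c\<in>B. norm (b - c) \<le> e)"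
        by blast
    qed
  qed
qed

theorem corollary3p3:
  shows "subspace (lLwc :: ('a::banach_lattice \<Rightarrow>\<^sub>L 'a) set)
    \<and> closed (lLwc :: ('a \<Rightarrow>\<^sub>L 'a) set)
    \<and> (\<forall>T\<in>(lLwc :: ('a \<Rightarrow>\<^sub>L 'a) set). \<forall>S. T o\<^sub>L S \<in> lLwc)
    \<and> (\<forall>T\<in>(lLwc :: ('a \<Rightarrow>\<^sub>L 'a) set). \<forall>S\<in>lLwc. T o\<^sub>L S \<in> lLwc)
    \<and> ((id_blinfun :: 'a \<Rightarrow>\<^sub>L 'a) \<in> lLwc \<longleftrightarrow> limitedly_L_weakly_compact (id :: 'a \<Rightarrow> 'a))"
proof (intro conjI)
  show "subspace (lLwc :: ('a \<Rightarrow>\<^sub>L 'a) set)"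
    unfolding subspace_def using lLwc_zero lLwc_add lLwc_scaleR by blast
  show "closed (lLwc :: ('a \<Rightarrow>\<^sub>L 'a) set)"
    by (rule closed_lLwc)
  show "\<forall>T\<in>(lLwc :: ('a \<Rightarrow>\<^sub>L 'a) set). \<forall>S. T o\<^sub>L S \<in> lLwc"
    using lLwc_compose by blast
  then show "\<forall>T\<in>(lLwc :: ('a \<Rightarrow>\<^sub>L 'a) set). \<forall>S\<in>lLwc. T o\<^sub>L S \<in> lLwc"
    by blast
  show "(id_blinfun :: 'a \<Rightarrow>\<^sub>L 'a) \<in> lLwc \<longleftrightarrow> limitedly_L_weakly_compact (id :: 'a \<Rightarrow> 'a)"
    by (simp add: lLwc_def id_blinfun.rep_eq id_def)
qed

end
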